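(* Consider the system of ordinary differential equations for $(x(t),h(t),n(t))$: \[ \frac{dx}{dt} = x(1-x)S(h) + \mu(h)(1-x) - \nu x,\qquad \frac{dh}{dt} = \alpha n(1+\beta x)\,G(h) - \Gamma(n)(h-1),\qquad \frac{dn}{dt} = r n(1-n) - D(h,x)\,n, \] where \[ S(h) = \frac{s_0}{1+e^{-\lambda(h-h_c)}} - c + \varphi\, d_S(h),\quad d_S(h) = \frac{d_{\max} h^m}{h_{50}^m + h^m},\quad \mu(h)=\mu_0 h^p, \] \[ G(h) = \frac{K_g}{K_g+h},\quad \Gamma(n) = \frac{\gamma_0}{1+\eta n},\quad D(h,x) = (1-\varphi x)\,d_S(h), \] with parameters $s_0,\lambda,h_c,c,d_{\max},h_{50},m,\mu_0,p,\alpha,\beta,K_g,\gamma_0,\eta,r$ positive, $0<\varphi\le 1$, and $\nu=0$. Assume $\mathcal{R}_0^* = \dfrac{r}{d_{\max}} > 1$. Then the system has a unique equilibrium of the form $E_1=(1,h^*,n^* )$ with $h^*>0$ and $n^*>0$, and $E_1\in[0,1]\times(0,\infty)\times[0,1]$.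
   Context: The model describes a tumor: $x$ is the fraction of acid-resistant cells, $h$ is the normalized proton concentration ($h=1$ physiological), $n$ is normalized tumor density. An equilibrium with $x^*=1$ is one with no acid-sensitive cells. *)

theory Defs
  imports Complex_Main
begin

text \<open>Tumour acidity model. Real exponents h^m, h^p are rendered with powr
(h > 0 throughout the statement).\<close>

definition dS :: "real \<Rightarrow> real \<Rightarrow> real \<Rightarrow> real \<Rightarrow> real" where
  "dS dmax h50 m h = dmax * h powr m / (h50 powr m + h powr m)"

definition Ssel :: "real \<Rightarrow> real \<Rightarrow> real \<Rightarrow> real \<Rightarrow> real \<Rightarrow> real \<Rightarrow> real \<Rightarrow> real \<Rightarrow> real \<Rightarrow> real" where
  "Ssel s0 lam hc c phi dmax h50 m h =
     s0 / (1 + exp (- lam * (h - hc))) - c + phi * dS dmax h50 m h"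

definition mu_fun :: "real \<Rightarrow> real \<Rightarrow> real \<Rightarrow> real" where
  "mu_fun mu0 p h = mu0 * h powr p"

definition G_fun :: "real \<Rightarrow> real \<Rightarrow> real" where
  "G_fun Kg h = Kg / (Kg + h)"

definition Gamma_fun :: "real \<Rightarrow> real \<Rightarrow> real \<Rightarrow> real" where
  "Gamma_fun gamma0 eta n = gamma0 / (1 + eta * n)"

definition D_fun :: "real \<Rightarrow> real \<Rightarrow> real \<Rightarrow> real \<Rightarrow> real \<Rightarrow> real \<Rightarrow> real" where
  "D_fun phi dmax h50 m h x = (1 - phi * x) * dS dmax h50 m h"

definition fx :: "real \<Rightarrow> real \<Rightarrow> real \<Rightarrow> real \<Rightarrow> real \<Rightarrow> real \<Rightarrow> real \<Rightarrow> real \<Rightarrow> real \<Rightarrow> real \<Rightarrow> real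
                  \<Rightarrow> real \<Rightarrow> real \<Rightarrow> real" where
  "fx s0 lam hc c phi dmax h50 m mu0 p nu x h =
     x * (1 - x) * Ssel s0 lam hc c phi dmax h50 m h + mu_fun mu0 p h * (1 - x) - nu * x"

definition fh :: "real \<Rightarrow> real \<Rightarrow> real \<Rightarrow> real \<Rightarrow> real \<Rightarrow> real \<Rightarrow> real \<Rightarrow> real \<Rightarrow> real" where
  "fh alpha beta Kg gamma0 eta x h n =
     alpha * n * (1 + beta * x) * G_fun Kg h - Gamma_fun gamma0 eta n * (h - 1)"

definition fn :: "real \<Rightarrow> real \<Rightarrow> real \<Rightarrow> real \<Rightarrow> real \<Rightarrow> real \<Rightarrow> real \<Rightarrow> real \<Rightarrow> real" where
  "fn r phi dmax h50 m x h n = r * n * (1 - n) - D_fun phi dmax h50 m h x * n"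

end

theory Submission
  imports Defs
begin

text \<open>With no acid-sensitive cells (\<open>x = 1\<close>, \<open>\<nu> = 0\<close>) the \<open>x\<close>-equation holds
  identically, and \<open>dn/dt = 0\<close> with \<open>n > 0\<close> forces \<open>n = n\<^sup>*(h) = 1 - (1 - \<phi>) d\<^sub>S(h) / r\<close>,
  which lies in \<open>(0, 1]\<close> because \<open>d\<^sub>S < d\<^sub>m\<^sub>a\<^sub>x < r\<close>. Substituting it into \<open>dh/dt = 0\<close>
  leaves one equation \<open>F(h) = 0\<close>, where \<open>F(h) = a n\<^sup>*(h) (1 + \<eta> n\<^sup>*(h)) G(h) - (h - 1)\<close>
  with \<open>a = \<alpha> (1 + \<beta>) / \<gamma>\<^sub>0\<close> is the difference of a non-increasing and a strictly increasing function of \<open>h\<close>.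
  Hence \<open>F\<close> has at most one zero, and it has one between \<open>1\<close> and \<open>1 + a (1 + \<eta>)\<close>
  by the intermediate value theorem.\<close>

lemma strict_antimono_on_ex1_zero:
  fixes f :: "real \<Rightarrow> real"
  assumes "strict_antimono_on S f" "{a..b} \<subseteq> S" "a \<le> b"
    and "f b \<le> 0" "0 \<le> f a" "continuous_on {a..b} f"
  shows "\<exists>x\<in>S. f x = 0 \<and> (\<forall>y\<in>S. f y = 0 \<longrightarrow> y = x)"
proof -
  obtain x where "a \<le> x" "x \<le> b" "f x = 0"
    using IVT2'[of f b 0 a] assms(3-6) by blast
  moreover have "inj_on f S"
    using assms(1) strict_antimono_iff_antimono by blast
  ultimately show ?thesis
    using assms(2) by (metis atLeastAtMost_iff inj_onD subsetD)
qed

lemma dS_pos: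
  assumes "dmax > 0" "h50 > 0" "h > 0"
  shows "0 < dS dmax h50 m h"
  using assms unfolding dS_def by (simp add: add_pos_pos)

lemma dS_less:
  assumes "dmax > 0" "h50 > 0" "h > 0"
  shows "dS dmax h50 m h < dmax"
  using assms unfolding dS_def by (simp add: add_pos_pos divide_less_eq)

lemma dS_mono:
  assumes "dmax \<ge> 0" "h50 > 0" "m \<ge> 0" "0 < a" "a \<le> b"
  shows "dS dmax h50 m a \<le> dS dmax h50 m b"
proof -
  have "a powr m \<le> b powr m"
    using assms by (simp add: powr_mono2)
  then have "a powr m * (h50 powr m + b powr m) \<le> b powr m * (h50 powr m + a powr m)"
    by (simp add: algebra_simps mult_right_mono)
  then have "a powr m / (h50 powr m + a powr m) \<le> b powr m / (h50 powr m + b powr m)"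
    using assms by (simp add: divide_simps add_pos_pos)
  then show ?thesis
    unfolding dS_def using assms(1) by (metis mult_left_mono times_divide_eq_right)
qed

lemma continuous_on_dS:
  assumes "h50 > 0"
  shows "continuous_on {0<..} (dS dmax h50 m)"
proof -
  have "h50 powr m + h powr m \<noteq> 0" if "h > 0" for h :: real
    using assms that by (simp add: add_pos_pos less_imp_neq[symmetric])
  then show ?thesis
    unfolding dS_def[abs_def] by (intro continuous_intros) auto
qed

lemma fx_at_one: "fx s0 lam hc c phi dmax h50 m mu0 p nu 1 h = - nu"
  unfolding fx_def by simp

lemma fn_eq_0_iff:
  assumes "r \<noteq> 0" "n \<noteq> 0"
  shows "fn r phi dmax h50 m x h n = 0 \<longleftrightarrow> n = 1 - D_fun phi dmax h50 m h x / r"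
proof -
  have "fn r phi dmax h50 m x h n = n * (r * (1 - n) - D_fun phi dmax h50 m h x)"
    unfolding fn_def by (simp add: algebra_simps)
  also have "\<dots> = 0 \<longleftrightarrow> r * (1 - n) = D_fun phi dmax h50 m h x"
    using assms(2) by simp
  also have "\<dots> \<longleftrightarrow> n = 1 - D_fun phi dmax h50 m h x / r"
    using assms(1) by (auto simp: field_simps)
  finally show ?thesis .
qed

lemma fh_eq_0_iff:
  assumes "gamma0 \<noteq> 0" "1 + eta * n \<noteq> 0"
  shows "fh alpha beta Kg gamma0 eta x h n = 0 \<longleftrightarrow>
    alpha * (1 + beta * x) / gamma0 * n * (1 + eta * n) * G_fun Kg h = h - 1"
proof -
  have "Gamma_fun gamma0 eta n * (alpha * (1 + beta * x) / gamma0 * n * (1 + eta * n) * G_fun Kg h)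
      = alpha * n * (1 + beta * x) * G_fun Kg h"
    unfolding Gamma_fun_def using assms by (simp add: divide_simps ac_simps)
  then have "fh alpha beta Kg gamma0 eta x h n =
    Gamma_fun gamma0 eta n * (alpha * (1 + beta * x) / gamma0 * n * (1 + eta * n) * G_fun Kg h - (h - 1))"
    unfolding fh_def by (simp add: right_diff_distrib)
  moreover have "Gamma_fun gamma0 eta n \<noteq> 0"
    unfolding Gamma_fun_def using assms by simp
  ultimately show ?thesis
    by simp
qed

locale resistant_equilibrium =
  fixes alpha beta Kg gamma0 eta r phi dmax h50 m :: real
  assumes alpha: "alpha \<ge> 0" and beta: "beta \<ge> 0" and Kg: "Kg > 0" and gamma0: "gamma0 > 0"
    and eta: "eta \<ge> 0" and dmax: "dmax > 0" and h50: "h50 > 0" and m: "m \<ge> 0"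
    and phi: "0 \<le> phi" "phi \<le> 1" and growth: "dmax < r"
begin

definition nstar :: "real \<Rightarrow> real" where
  "nstar h = 1 - D_fun phi dmax h50 m h 1 / r"

definition gain :: real where
  "gain = alpha * (1 + beta) / gamma0"

definition acid_balance :: "real \<Rightarrow> real" where
  "acid_balance h = gain * nstar h * (1 + eta * nstar h) * G_fun Kg h - (h - 1)"

lemma r_pos: "r > 0"
  using dmax growth by simp

lemma gain_nonneg: "gain \<ge> 0"
  unfolding gain_def using alpha beta gamma0 by simp

lemma nstar_eq: "nstar h = 1 - (1 - phi) * dS dmax h50 m h / r"
  unfolding nstar_def D_fun_def by simp

lemma nstar_pos:
  assumes "h > 0"
  shows "0 < nstar h"
proof -
  have "(1 - phi) * dS dmax h50 m h \<le> dS dmax h50 m h"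
    using phi dS_pos[where m=m, OF dmax h50 assms] by (simp add: mult_le_cancel_right1)
  also have "\<dots> < r"
    using dS_less[where m=m, OF dmax h50 assms] growth by linarith
  finally show ?thesis
    unfolding nstar_eq using r_pos by simp
qed

lemma nstar_le_one:
  assumes "h > 0"
  shows "nstar h \<le> 1"
proof -
  have "0 \<le> (1 - phi) * dS dmax h50 m h"
    using phi dS_pos[where m=m, OF dmax h50 assms] by simp
  then show ?thesis
    unfolding nstar_eq using r_pos by simp
qed

lemma nstar_antimono: "antimono_on {0<..} nstar"
proof (rule monotone_onI)
  fix a b :: real
  assume "a \<in> {0<..}" "a \<le> b"
  then have "(1 - phi) * dS dmax h50 m a \<le> (1 - phi) * dS dmax h50 m b"
    using dS_mono[OF _ h50 m] dmax phi by (simp add: mult_left_mono)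
  then show "nstar b \<le> nstar a"
    unfolding nstar_eq using r_pos by (simp add: divide_right_mono)
qed

lemma continuous_on_nstar: "continuous_on {0<..} nstar"
  unfolding nstar_eq[abs_def] using continuous_on_dS[OF h50] r_pos
  by (intro continuous_intros) auto

lemma fn_eq_0_iff_nstar:
  assumes "n \<noteq> 0"
  shows "fn r phi dmax h50 m 1 h n = 0 \<longleftrightarrow> n = nstar h"
  unfolding nstar_def using fn_eq_0_iff[OF _ assms] r_pos by simp

lemma fh_nstar_eq_0_iff:
  assumes "h > 0"
  shows "fh alpha beta Kg gamma0 eta 1 h (nstar h) = 0 \<longleftrightarrow> acid_balance h = 0"
proof -
  have "0 \<le> eta * nstar h"
    using eta nstar_pos[OF assms] by simp
  then have "1 + eta * nstar h \<noteq> 0"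
    by linarith
  then show ?thesis
    unfolding acid_balance_def gain_def using fh_eq_0_iff gamma0 by simp
qed

lemma acid_balance_strict_antimono: "strict_antimono_on {0<..} acid_balance"
proof (rule monotone_onI)
  fix a b :: real
  assume a: "a \<in> {0<..}" and "a < b"
  have n: "nstar b \<le> nstar a" "0 < nstar b"
    using nstar_antimono a \<open>a < b\<close> nstar_pos[of b] by (auto simp: monotone_on_def)
  have G: "G_fun Kg b \<le> G_fun Kg a" "0 \<le> G_fun Kg b"
    unfolding G_fun_def using Kg a \<open>a < b\<close> by (auto intro: divide_left_mono)
  have "eta * nstar b \<le> eta * nstar a"
    using n eta by (simp add: mult_left_mono)
  then have "nstar b * (1 + eta * nstar b) \<le> nstar a * (1 + eta * nstar a)"
    using n eta by (intro mult_mono) auto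
  moreover have "0 \<le> nstar b * (1 + eta * nstar b)"
    using n eta by simp
  ultimately have "nstar b * (1 + eta * nstar b) * G_fun Kg b \<le> nstar a * (1 + eta * nstar a) * G_fun Kg a"
    using G by (simp add: mult_mono')
  then have "gain * (nstar b * (1 + eta * nstar b) * G_fun Kg b)
      \<le> gain * (nstar a * (1 + eta * nstar a) * G_fun Kg a)"
    using gain_nonneg by (rule mult_left_mono)
  then show "acid_balance b < acid_balance a"
    unfolding acid_balance_def using \<open>a < b\<close> by (simp add: mult.assoc)
qed

lemma acid_balance_one_nonneg: "0 \<le> acid_balance 1"
  unfolding acid_balance_def G_fun_def
  using gain_nonneg eta Kg nstar_pos[of 1] by simp

lemma acid_balance_upper_nonpos: "acid_balance (1 + gain * (1 + eta)) \<le> 0"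
  (is "acid_balance ?H \<le> 0")
proof -
  have H: "?H > 0"
    using gain_nonneg eta by (simp add: add_pos_nonneg)
  have "nstar ?H * (1 + eta * nstar ?H) * G_fun Kg ?H \<le> 1 * (1 + eta * 1) * 1"
    using nstar_pos[OF H] nstar_le_one[OF H] eta Kg H unfolding G_fun_def
    by (intro mult_mono add_left_mono mult_left_mono) auto
  then have "gain * (nstar ?H * (1 + eta * nstar ?H) * G_fun Kg ?H) \<le> gain * (1 + eta)"
    using gain_nonneg by (simp add: mult_left_mono)
  then show ?thesis
    unfolding acid_balance_def by (simp add: mult.assoc)
qed

lemma continuous_on_acid_balance: "continuous_on {0<..} acid_balance"
  unfolding acid_balance_def[abs_def] G_fun_def using continuous_on_nstar Kg
  by (intro continuous_intros) (auto simp: add_pos_pos intro: less_imp_neq[symmetric])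

lemma ex1_acid_balance_zero:
  "\<exists>h\<in>{0<..}. acid_balance h = 0 \<and> (\<forall>h'\<in>{0<..}. acid_balance h' = 0 \<longrightarrow> h' = h)"
proof (rule strict_antimono_on_ex1_zero[OF acid_balance_strict_antimono _ _
      acid_balance_upper_nonpos acid_balance_one_nonneg])
  show "1 \<le> 1 + gain * (1 + eta)"
    using gain_nonneg eta by simp
  then show "{1..1 + gain * (1 + eta)} \<subseteq> {0<..}"
    by auto
  then show "continuous_on {1..1 + gain * (1 + eta)} acid_balance"
    using continuous_on_acid_balance continuous_on_subset by blast
qed

end

theorem theorem3:
  fixes s0 lam hc c dmax h50 m mu0 p alpha beta Kg gamma0 eta r phi nu :: real
  assumes "s0 > 0" "lam > 0" "hc > 0" "c > 0" "dmax > 0" "h50 > 0" "m > 0"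
    "mu0 > 0" "p > 0" "alpha > 0" "beta > 0" "Kg > 0" "gamma0 > 0" "eta > 0" "r > 0"
    and "0 < phi" "phi \<le> 1"
    and "nu = 0"
    and "r / dmax > 1"
  shows "\<exists>h n. h > 0 \<and> n > 0 \<and>
            fx s0 lam hc c phi dmax h50 m mu0 p nu 1 h = 0 \<and>
            fh alpha beta Kg gamma0 eta 1 h n = 0 \<and>
            fn r phi dmax h50 m 1 h n = 0 \<and>
            (\<forall>h' n'. h' > 0 \<and> n' > 0 \<and>
               fx s0 lam hc c phi dmax h50 m mu0 p nu 1 h' = 0 \<and>
               fh alpha beta Kg gamma0 eta 1 h' n' = 0 \<and>
               fn r phi dmax h50 m 1 h' n' = 0 \<longrightarrow> h' = h \<and> n' = n) \<and>
            (1::real) \<in> {0..1} \<and> h \<in> {0<..} \<and> n \<in> {0..1}"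
proof -
  interpret resistant_equilibrium alpha beta Kg gamma0 eta r phi dmax h50 m
    using assms by unfold_locales (auto simp: less_divide_eq)
  obtain h where h: "h > 0" "acid_balance h = 0"
    and unique: "\<And>h'. h' > 0 \<Longrightarrow> acid_balance h' = 0 \<Longrightarrow> h' = h"
    using ex1_acid_balance_zero by auto
  have fx: "fx s0 lam hc c phi dmax h50 m mu0 p nu 1 h' = 0" for h'
    using fx_at_one \<open>nu = 0\<close> by simp
  have n: "0 < nstar h" "nstar h \<le> 1"
    using nstar_pos[OF h(1)] nstar_le_one[OF h(1)] by auto
  have fn: "fn r phi dmax h50 m 1 h (nstar h) = 0"
    using fn_eq_0_iff_nstar n by simp
  have fh: "fh alpha beta Kg gamma0 eta 1 h (nstar h) = 0"
    using fh_nstar_eq_0_iff h by simp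
  show ?thesis
  proof (intro exI conjI allI impI)
    fix h' n'
    assume eq: "h' > 0 \<and> n' > 0 \<and> fx s0 lam hc c phi dmax h50 m mu0 p nu 1 h' = 0 \<and>
      fh alpha beta Kg gamma0 eta 1 h' n' = 0 \<and> fn r phi dmax h50 m 1 h' n' = 0"
    then have "n' = nstar h'"
      using fn_eq_0_iff_nstar by auto
    with eq show "h' = h" "n' = nstar h"
      using fh_nstar_eq_0_iff unique by auto
  qed (use h n fx fn fh in auto)
qed

end
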